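(* For every $n\ge4$, the function $f_n(x_1,\ldots,x_n)=x_1x_2\vee x_1x_3\vee\cdots\vee x_1x_{n-1}\vee x_2x_3\cdots x_n$ is a positive threshold function depending on all its variables, it is not linear read-once, and its specification number in $\mathcal{H}_n$ is $\sigma_{\mathcal{H}_n}(f_n)=n+1$.
   Context: $f$ on $\{0,1\}^n$ is positive if $f(\mathbf{x})=1$ and $\mathbf{x}\le\mathbf{y}$ coordinatewise imply $f(\mathbf{y})=1$. $f$ is a threshold function if there are $w_1,\ldots,w_n,t\in\mathbb{R}$ with $f(\mathbf{x})=0\iff\sum_iw_ix_i\le t$. $\mathcal{H}_n$ is the class of threshold functions of $n$ variables. A set $S\subseteq\{0,1\}^n$ specifies $f\in\mathcal{H}_n$ if $f$ is the only function in $\mathcal{H}_n$ agreeing with $f$ on $S$; $\sigma_{\mathcal{H}_n}(f)$ is the minimum size of such a set. Linear read-once (lro): constant or representable by a nested formula (literals are nested; $x\vee t$, $x\wedge t$, $\overline{x}\vee t$, $\overline{x}\wedge t$ are nested when $t$ is nested and contains neither $x$ nor $\overline{x}$). *)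

theory Defs
  imports Complex_Main
begin

text \<open>Points of the cube {0,1}^n are boolean lists of length n (True = 1).
  Variable x_(i+1) of the paper is the list position i.  A Boolean function of
  n variables is any f :: bool list => bool; only its values on the cube matter,
  and all notions below only look at the cube.\<close>

definition cube :: "nat \<Rightarrow> bool list set" where
  "cube n = {xs. length xs = n}"

definition positive_fn :: "nat \<Rightarrow> (bool list \<Rightarrow> bool) \<Rightarrow> bool" where
  "positive_fn n f \<longleftrightarrow> (\<forall>x\<in>cube n. \<forall>y\<in>cube n.
      f x \<and> (\<forall>i<n. x ! i \<longrightarrow> y ! i) \<longrightarrow> f y)"

definition threshold_fn :: "nat \<Rightarrow> (bool list \<Rightarrow> bool) \<Rightarrow> bool" where
  "threshold_fn n f \<longleftrightarrow> (\<exists>(w::nat \<Rightarrow> real) (t::real). \<forall>x\<in>cube n.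
      (\<not> f x \<longleftrightarrow> (\<Sum>i<n. w i * (if x ! i then 1 else 0)) \<le> t))"

definition depends_on_all :: "nat \<Rightarrow> (bool list \<Rightarrow> bool) \<Rightarrow> bool" where
  "depends_on_all n f \<longleftrightarrow> (\<forall>i<n. \<exists>x\<in>cube n. f x \<noteq> f (x[i := \<not> x ! i]))"

definition specifies :: "nat \<Rightarrow> bool list set \<Rightarrow> (bool list \<Rightarrow> bool) \<Rightarrow> bool" where
  "specifies n S f \<longleftrightarrow> S \<subseteq> cube n \<and>
     (\<forall>g. threshold_fn n g \<and> (\<forall>x\<in>S. g x = f x) \<longrightarrow> (\<forall>x\<in>cube n. g x = f x))"

definition spec_number :: "nat \<Rightarrow> (bool list \<Rightarrow> bool) \<Rightarrow> nat" where
  "spec_number n f = (LEAST k. \<exists>S. specifies n S f \<and> card S = k)"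

datatype nested = Lit nat bool | NOr nat bool nested | NAnd nat bool nested

fun nvars :: "nested \<Rightarrow> nat set" where
  "nvars (Lit i b) = {i}"
| "nvars (NOr i b t) = insert i (nvars t)"
| "nvars (NAnd i b t) = insert i (nvars t)"

fun nested_ok :: "nested \<Rightarrow> bool" where
  "nested_ok (Lit i b) = True"
| "nested_ok (NOr i b t) = (i \<notin> nvars t \<and> nested_ok t)"
| "nested_ok (NAnd i b t) = (i \<notin> nvars t \<and> nested_ok t)"

fun neval :: "nested \<Rightarrow> bool list \<Rightarrow> bool" where
  "neval (Lit i b) x = (x ! i = b)"
| "neval (NOr i b t) x = ((x ! i = b) \<or> neval t x)"
| "neval (NAnd i b t) x = ((x ! i = b) \<and> neval t x)"

definition lro :: "nat \<Rightarrow> (bool list \<Rightarrow> bool) \<Rightarrow> bool" where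
  "lro n f \<longleftrightarrow> (\<exists>c. \<forall>x\<in>cube n. f x = c) \<or>
     (\<exists>\<phi>. nested_ok \<phi> \<and> nvars \<phi> \<subseteq> {..<n} \<and> (\<forall>x\<in>cube n. f x = neval \<phi> x))"

definition fn :: "nat \<Rightarrow> bool list \<Rightarrow> bool" where
  "fn n x \<longleftrightarrow> (\<exists>j\<in>{1..n-2}. x ! 0 \<and> x ! j) \<or> (\<forall>j\<in>{1..n-1}. x ! j)"

end

(*
  Identify the points of the cube with subsets of {0..n-1}.  The n+1 points listed in
  spec_sets specify f_n: for weights w and threshold t agreeing with f_n on them, the exchange
  identity w{0,j} + w({1..n-1}-{j}) = w{0,n-1} + w{1..n-2} puts {1..n-1}-{j} below the
  threshold, so w_j > 0; similarly w_(n-1) > 0 and w_0 >= 0, and with nonnegative weights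
  every point is decided by comparing it with the minimal true and maximal false points.
  Conversely, flipping f_n at any one of these points leaves a threshold function (explicit
  weights), so every specifying set contains all of them.

  Every nested formula is canalizing (a single literal fixes its value), whereas f_n takes
  both values on each half-cube x_i = b; hence f_n is not linear read-once.
*)

theory Submission
  imports Defs
begin

section \<open>Points of the cube as sets\<close>

definition point :: "nat \<Rightarrow> nat set \<Rightarrow> bool list" where
  "point n A = map (\<lambda>i. i \<in> A) [0..<n]"

lemma length_point [simp]: "length (point n A) = n"
  by (simp add: point_def)

lemma nth_point [simp]: "i < n \<Longrightarrow> point n A ! i \<longleftrightarrow> i \<in> A"
  by (simp add: point_def)

lemma point_in_cube [simp]: "point n A \<in> cube n"
  by (simp add: cube_def)

lemma point_eq_iff: "A \<subseteq> {..<n} \<Longrightarrow> B \<subseteq> {..<n} \<Longrightarrow> point n A = point n B \<longleftrightarrow> A = B"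
  by (auto simp: list_eq_iff_nth_eq)

lemma point_of_nth: "x \<in> cube n \<Longrightarrow> point n {i. i < n \<and> x ! i} = x"
  by (auto simp: cube_def list_eq_iff_nth_eq)

lemma ball_cube_iff: "(\<forall>x\<in>cube n. P x) \<longleftrightarrow> (\<forall>A\<subseteq>{..<n}. P (point n A))"
  by (metis (no_types, lifting) mem_Collect_eq point_in_cube point_of_nth subsetI lessThan_iff)

lemma point_update_True: "i < n \<Longrightarrow> (point n A)[i := True] = point n (insert i A)"
  by (auto simp: list_eq_iff_nth_eq nth_list_update)

lemma weighted_sum_point:
  assumes "A \<subseteq> {..<n}"
  shows "(\<Sum>i<n. w i * (if point n A ! i then 1 else 0)) = (sum w A :: real)"
proof -
  have "(\<Sum>i<n. w i * (if point n A ! i then 1 else 0)) = (\<Sum>i<n. if i \<in> A then w i else 0)"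
    by (rule sum.cong) auto
  also have "\<dots> = sum w A"
    using assms by (simp add: sum.If_cases Int_absorb1)
  finally show ?thesis .
qed

lemma threshold_fn_iff_sets:
  "threshold_fn n f \<longleftrightarrow> (\<exists>w (t::real). \<forall>A\<subseteq>{..<n}. \<not> f (point n A) \<longleftrightarrow> sum w A \<le> t)"
  unfolding threshold_fn_def ball_cube_iff by (simp add: weighted_sum_point del: nth_point)

lemma finite_cube: "finite (cube n)"
  using finite_lists_length_eq[of "UNIV :: bool set" n] by (simp add: cube_def)

section \<open>Specifying sets and flipped functions\<close>

definition flip_at :: "(bool list \<Rightarrow> bool) \<Rightarrow> bool list \<Rightarrow> bool list \<Rightarrow> bool" where
  "flip_at f x y \<longleftrightarrow> (if y = x then \<not> f y else f y)"

lemma flip_threshold_imp_mem_specifying: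
  assumes "specifies n S f" "x \<in> cube n" "threshold_fn n (flip_at f x)"
  shows "x \<in> S"
proof (rule ccontr)
  assume "x \<notin> S"
  then have "\<forall>y\<in>S. flip_at f x y = f y" by (auto simp: flip_at_def)
  with assms have "flip_at f x x = f x" unfolding specifies_def by blast
  then show False by (simp add: flip_at_def)
qed

lemma spec_number_eqI:
  assumes E: "specifies n E f" and essential: "\<forall>x\<in>E. threshold_fn n (flip_at f x)"
  shows "spec_number n f = card E"
  unfolding spec_number_def
proof (rule Least_equality)
  fix k assume "\<exists>S. specifies n S f \<and> card S = k"
  then obtain S where S: "specifies n S f" "card S = k" by blast
  have "E \<subseteq> cube n" "S \<subseteq> cube n" using E S(1) unfolding specifies_def by blast+
  then have "E \<subseteq> S" "finite S"
    using flip_threshold_imp_mem_specifying[OF S(1)] essential finite_subset[OF _ finite_cube] by blast+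
  then show "card E \<le> k" using S(2) card_mono by blast
qed (use E in blast)

lemma fn_point:
  assumes "2 \<le> n"
  shows "fn n (point n A) \<longleftrightarrow> (0 \<in> A \<and> A \<inter> {1..n-2} \<noteq> {}) \<or> {1..n-1} \<subseteq> A"
proof -
  have "(\<exists>j\<in>{1..n-2}. point n A ! 0 \<and> point n A ! j) \<longleftrightarrow> 0 \<in> A \<and> A \<inter> {1..n-2} \<noteq> {}"
    using assms by (force simp: disjoint_iff)
  moreover have "(\<forall>j\<in>{1..n-1}. point n A ! j) \<longleftrightarrow> {1..n-1} \<subseteq> A"
    using assms by (force simp: subset_eq)
  ultimately show ?thesis
    unfolding fn_def by simp
qed

lemma positive_fn_fn: "positive_fn n (fn n)"
  unfolding positive_fn_def
proof (intro ballI impI)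
  fix x y assume "fn n x \<and> (\<forall>i<n. x ! i \<longrightarrow> y ! i)"
  then have fx: "fn n x" and le: "\<And>i. i < n \<Longrightarrow> x ! i \<Longrightarrow> y ! i" by auto
  have lt: "j < n" if "j \<in> {1..n-1}" for j
    using that by auto
  from fx consider j where "j \<in> {1..n-2}" "x ! 0" "x ! j" | "\<forall>j\<in>{1..n-1}. x ! j"
    unfolding fn_def by blast
  then show "fn n y"
  proof cases
    case 1
    then have "j < n" "0 < n" using lt by auto
    then show ?thesis using 1 le unfolding fn_def by blast
  next
    case 2
    then show ?thesis using le lt unfolding fn_def by blast
  qed
qed

lemma nested_canalizing: "\<exists>i\<in>nvars \<phi>. \<exists>b c. \<forall>x. x ! i = b \<longrightarrow> neval \<phi> x = c"
proof (cases \<phi>)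
  case (Lit i b)
  then show ?thesis by (intro bexI[of _ i] exI[of _ b] exI[of _ True]) auto
next
  case (NOr i b t)
  then show ?thesis by (intro bexI[of _ i] exI[of _ b] exI[of _ True]) auto
next
  case (NAnd i b t)
  then show ?thesis by (intro bexI[of _ i] exI[of _ "\<not> b"] exI[of _ False]) auto
qed

context
  fixes n :: nat
  assumes n4: "4 \<le> n"
begin

lemma fn_singleton: "\<not> fn n (point n {i})"
proof -
  have "1 \<in> {1..n-1}" "2 \<in> {1..n-1}" using n4 by auto
  then have "\<not> {1..n-1} \<subseteq> {i}" by (auto simp: subset_singleton_iff)
  then show ?thesis using n4 by (auto simp: fn_point)
qed

lemma fn_cosingleton: "fn n (point n ({..<n} - {i}))"
proof -
  have "(if i = 1 then 2 else 1) \<in> ({..<n} - {i}) \<inter> {1..n-2}" using n4 by auto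
  then have "({..<n} - {i}) \<inter> {1..n-2} \<noteq> {}" by blast
  then show ?thesis using n4 by (subst fn_point) auto
qed

lemma fn_not_canalizing:
  assumes "i < n"
  shows "\<exists>x\<in>cube n. \<exists>y\<in>cube n. x ! i = b \<and> y ! i = b \<and> fn n x \<noteq> fn n y"
proof (cases b)
  case True
  have "fn n (point n {..<n})" using n4 by (auto simp: fn_point)
  then show ?thesis using True assms fn_singleton[of i] by (intro bexI) auto
next
  case False
  have "\<not> fn n (point n {})" using n4 by (simp add: fn_point)
  then show ?thesis using False assms fn_cosingleton[of i] by (intro bexI) auto
qed

lemma not_lro_fn: "\<not> lro n (fn n)"
proof
  assume "lro n (fn n)"
  then consider c where "\<forall>x\<in>cube n. fn n x = c"
    | \<phi> where "nvars \<phi> \<subseteq> {..<n}" "\<forall>x\<in>cube n. fn n x = neval \<phi> x"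
    unfolding lro_def by blast
  then show False
  proof cases
    case 1
    then show False using fn_not_canalizing[of 0 True] n4 by auto
  next
    case 2
    obtain i b c where "i \<in> nvars \<phi>" "\<forall>x. x ! i = b \<longrightarrow> neval \<phi> x = c"
      using nested_canalizing by blast
    then show False using 2 fn_not_canalizing[of i b] by auto
  qed
qed

lemma depends_on_all_fn: "depends_on_all n (fn n)"
  unfolding depends_on_all_def
proof (intro allI impI)
  fix i assume i: "i < n"
  obtain A where "i \<notin> A" "\<not> fn n (point n A)" "fn n (point n (insert i A))"
  proof -
    consider "i = 0" | "i = n - 1" | "i \<in> {1..n-2}" using i by force
    then show thesis
    proof cases
      case 1
      then show thesis using that[of "{1}"] fn_singleton[of 1] n4 by (auto simp: fn_point)
    next
      case 2
      moreover have "insert (n-1) {1..n-2} = {1..n-1}" "n - 1 \<notin> {1..n-2}" using n4 by auto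
      ultimately show thesis using that[of "{1..n-2}"] n4 by (auto simp: fn_point)
    next
      case 3
      then show thesis using that[of "{0}"] fn_singleton[of 0] n4 by (auto simp: fn_point)
    qed
  qed
  then show "\<exists>x\<in>cube n. fn n x \<noteq> fn n (x[i := \<not> x ! i])"
    using i by (intro bexI[of _ "point n A"]) (auto simp: point_update_True)
qed

end

section \<open>The n + 1 specifying points\<close>

(* With 0-based positions: the minimal true points x_1 x_j and x_2 ... x_n of f_n, and two of its
   maximal false points x_1 x_n and x_2 ... x_(n-1). *)
definition spec_sets :: "nat \<Rightarrow> nat set set" where
  "spec_sets n = (\<lambda>j. {0, j}) ` {1..n-2} \<union> {{1..n-1}, {0, n-1}, {1..n-2}}"

context
  fixes n :: nat
  assumes n4: "4 \<le> n"
begin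

lemma not_fn_point_cases:
  assumes A: "A \<subseteq> {..<n}" and not_fn: "\<not> fn n (point n A)"
  obtains "A \<subseteq> {0, n-1}" | "A \<subseteq> {1..n-2}" | j where "j \<in> {1..n-2}" "A \<subseteq> {1..n-1} - {j}"
proof (cases "0 \<in> A")
  case True
  then have "A \<inter> {1..n-2} = {}" using not_fn n4 by (simp add: fn_point)
  then have "A \<subseteq> {0, n-1}" using A by fastforce
  then show thesis by (rule that(1))
next
  case False
  have "\<not> {1..n-1} \<subseteq> A" using not_fn n4 by (simp add: fn_point)
  then obtain j where j: "j \<in> {1..n-1}" "j \<notin> A" by blast
  have "x \<in> {1..n-1} - {j}" if x: "x \<in> A" for x
  proof -
    have "x < n" "x \<noteq> 0" "x \<noteq> j" using A \<open>0 \<notin> A\<close> j x by (blast, metis, metis)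
    then show ?thesis by auto
  qed
  then have sub: "A \<subseteq> {1..n-1} - {j}" by blast
  show thesis
  proof (cases "j = n - 1")
    case True
    moreover have "{1..n-1} - {n-1} = {1..n-2}" using n4 by auto
    ultimately show thesis using that(2) sub by simp
  next
    case False
    then have "j \<in> {1..n-2}" using j by auto
    then show thesis using that(3) sub by blast
  qed
qed

lemma sum_pair_plus_tail_minus:
  assumes "j \<in> {1..n-2}"
  shows "sum w {0, j} + sum w ({1..n-1} - {j}) = sum w {0, n-1} + (sum w {1..n-2} :: real)"
proof -
  have "sum w {0, j} + sum w ({1..n-1} - {j}) = sum w ({0, j} \<union> ({1..n-1} - {j}))"
    by (rule sum.union_disjoint[symmetric]) auto
  also have "{0, j} \<union> ({1..n-1} - {j}) = {0, n-1} \<union> {1..n-2}"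
    using assms n4 by auto
  also have "sum w \<dots> = sum w {0, n-1} + sum w {1..n-2}"
    using n4 by (intro sum.union_disjoint) auto
  finally show ?thesis .
qed

context
  fixes w :: "nat \<Rightarrow> real" and t :: real
  assumes pair: "\<And>j. j \<in> {1..n-2} \<Longrightarrow> t < sum w {0, j}"
    and tail: "t < sum w {1..n-1}"
    and ends: "sum w {0, n-1} \<le> t"
    and middle: "sum w {1..n-2} \<le> t"
begin

lemma sum_tail_minus_le:
  assumes "j \<in> {1..n-2}"
  shows "sum w ({1..n-1} - {j}) \<le> t"
  using sum_pair_plus_tail_minus[OF assms, of w] pair[OF assms] ends middle by linarith

lemma weights_nonneg:
  assumes "i < n"
  shows "0 \<le> w i"
proof -
  have middle_pos: "0 < w j" if j: "j \<in> {1..n-2}" for j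
  proof -
    have "sum w {1..n-1} = w j + sum w ({1..n-1} - {j})"
      using j by (subst sum.remove[of _ j]) auto
    then show ?thesis using sum_tail_minus_le[OF j] tail by linarith
  qed
  have "sum w {1..n-1} = w (n-1) + sum w ({1..n-1} - {n-1})"
    using n4 by (intro sum.remove) auto
  also have "{1..n-1} - {n-1} = {1..n-2}" using n4 by auto
  finally have "sum w {1..n-1} = w (n-1) + sum w {1..n-2}" .
  then have last_pos: "0 < w (n-1)" using tail middle by linarith
  have "w 1 \<le> sum w {1..n-2}"
    using n4 middle_pos by (intro member_le_sum) (auto intro: less_imp_le)
  moreover have "t < w 0 + w 1" using pair[of 1] n4 by simp
  ultimately have first_nonneg: "0 \<le> w 0" using middle by linarith
  consider "i = 0" | "i = n-1" | "i \<in> {1..n-2}" using assms by force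
  then show ?thesis
    by cases (use first_nonneg middle_pos last_pos in \<open>auto intro: less_imp_le\<close>)
qed

lemma sum_mono_subset:
  assumes "A \<subseteq> B" "B \<subseteq> {..<n}"
  shows "sum w A \<le> sum w B"
  using assms weights_nonneg by (intro sum_mono2) (auto intro: finite_subset)

lemma fn_point_iff_above_threshold:
  assumes A: "A \<subseteq> {..<n}"
  shows "fn n (point n A) \<longleftrightarrow> t < sum w A"
proof
  assume "fn n (point n A)"
  then have "(0 \<in> A \<and> A \<inter> {1..n-2} \<noteq> {}) \<or> {1..n-1} \<subseteq> A"
    using n4 by (simp add: fn_point)
  then show "t < sum w A"
  proof
    assume "0 \<in> A \<and> A \<inter> {1..n-2} \<noteq> {}"
    then obtain j where "j \<in> {1..n-2}" "{0, j} \<subseteq> A" by blast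
    then show ?thesis using pair sum_mono_subset[OF _ A] by (meson less_le_trans)
  next
    assume "{1..n-1} \<subseteq> A"
    then show ?thesis using tail sum_mono_subset[OF _ A] by (meson less_le_trans)
  qed
next
  assume "t < sum w A"
  moreover have "sum w A \<le> t" if "\<not> fn n (point n A)"
  proof -
    have "{0, n-1} \<subseteq> {..<n}" "{1..n-2} \<subseteq> {..<n}" "{1..n-1} - {j} \<subseteq> {..<n}" for j
      using n4 by auto
    then show ?thesis
      using not_fn_point_cases[OF A that] ends middle sum_tail_minus_le sum_mono_subset
      by (metis order_trans)
  qed
  ultimately show "fn n (point n A)" by linarith
qed

end

lemma spec_sets_subset: "B \<in> spec_sets n \<Longrightarrow> B \<subseteq> {..<n}"
  using n4 by (auto simp: spec_sets_def)

lemma fn_point_spec_sets: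
  "j \<in> {1..n-2} \<Longrightarrow> fn n (point n {0, j})"
  "fn n (point n {1..n-1})"
  "\<not> fn n (point n {0, n-1})"
  "\<not> fn n (point n {1..n-2})"
proof -
  show "j \<in> {1..n-2} \<Longrightarrow> fn n (point n {0, j})" "fn n (point n {1..n-1})"
    using n4 by (auto simp: fn_point)
  have "n - 1 \<in> {1..n-1}" "n - 1 \<notin> {1..n-2}" "1 \<in> {1..n-1}" "1 \<notin> {0, n-1}" using n4 by auto
  then have "\<not> {1..n-1} \<subseteq> {0, n-1}" "\<not> {1..n-1} \<subseteq> {1..n-2}" by blast+
  moreover have "{0, n-1} \<inter> {1..n-2} = {}" using n4 by auto
  ultimately show "\<not> fn n (point n {0, n-1})" "\<not> fn n (point n {1..n-2})"
    using n4 by (simp_all add: fn_point)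
qed

lemma specifies_spec_sets: "specifies n (point n ` spec_sets n) (fn n)"
  unfolding specifies_def
proof (intro conjI allI impI)
  show "point n ` spec_sets n \<subseteq> cube n" by auto
  fix g assume g_spec: "threshold_fn n g \<and> (\<forall>x\<in>point n ` spec_sets n. g x = fn n x)"
  then obtain w :: "nat \<Rightarrow> real" and t :: real where "\<forall>A\<subseteq>{..<n}. \<not> g (point n A) \<longleftrightarrow> sum w A \<le> t"
    unfolding threshold_fn_iff_sets by blast
  then have g: "\<And>A. A \<subseteq> {..<n} \<Longrightarrow> g (point n A) \<longleftrightarrow> t < sum w A"
    by (metis not_le)
  have agree: "\<And>B. B \<in> spec_sets n \<Longrightarrow> g (point n B) = fn n (point n B)"
    using g_spec by blast
  have spec_value: "t < sum w B \<longleftrightarrow> fn n (point n B)" if "B \<in> spec_sets n" for B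
    using g[OF spec_sets_subset[OF that]] agree[OF that] by simp
  have "\<forall>A\<subseteq>{..<n}. g (point n A) = fn n (point n A)"
  proof (intro allI impI)
    fix A assume A: "A \<subseteq> {..<n}"
    have "fn n (point n A) \<longleftrightarrow> t < sum w A"
    proof (rule fn_point_iff_above_threshold[OF _ _ _ _ A])
      show "t < sum w {0, j}" if "j \<in> {1..n-2}" for j
      proof -
        have "{0, j} \<in> spec_sets n" using that unfolding spec_sets_def by blast
        then show ?thesis using spec_value fn_point_spec_sets(1)[OF that] by blast
      qed
      have "{1..n-1} \<in> spec_sets n" "{0, n-1} \<in> spec_sets n" "{1..n-2} \<in> spec_sets n"
        unfolding spec_sets_def by blast+
      then show "t < sum w {1..n-1}" "sum w {0, n-1} \<le> t" "sum w {1..n-2} \<le> t"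
        using spec_value fn_point_spec_sets(2-4) by (blast, (meson not_le)+)
    qed
    then show "g (point n A) = fn n (point n A)" using g[OF A] by simp
  qed
  then show "\<forall>x\<in>cube n. g x = fn n x" by (simp add: ball_cube_iff)
qed

lemma card_spec_sets: "card (point n ` spec_sets n) = n + 1"
proof -
  let ?pairs = "(\<lambda>j. {0, j}) ` {1..n-2}" and ?triple = "{{1..n-1}, {0, n-1}, {1..n-2}}"
  have "inj_on (point n) (spec_sets n)"
    using spec_sets_subset by (intro inj_onI) (simp add: point_eq_iff)
  then have "card (point n ` spec_sets n) = card (spec_sets n)"
    by (rule card_image)
  also have "\<dots> = card (?pairs \<union> ?triple)"
    by (simp add: spec_sets_def)
  also have "\<dots> = card ?pairs + card ?triple"
  proof (rule card_Un_disjoint)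
    have "{0, j} \<noteq> {1..n-1}" "{0, j} \<noteq> {1..n-2}" "{0, j} \<noteq> {0, n-1}" if "j \<in> {1..n-2}" for j
    proof -
      have "0 \<notin> {1..n-1}" "0 \<notin> {1..n-2}" "n - 1 \<noteq> 0" "n - 1 \<noteq> j" using that n4 by auto
      then show "{0, j} \<noteq> {1..n-1}" "{0, j} \<noteq> {1..n-2}" "{0, j} \<noteq> {0, n-1}"
        by (metis insertI1, metis insertI1, simp add: doubleton_eq_iff)
    qed
    then show "?pairs \<inter> ?triple = {}" by blast
  qed simp_all
  also have "card ?pairs = n - 2"
    by (subst card_image) (auto intro: inj_onI simp: doubleton_eq_iff)
  also have "card ?triple = 3"
  proof -
    have "0 \<notin> {1..n-1}" "0 \<notin> {1..n-2}" "n - 1 \<in> {1..n-1}" "n - 1 \<notin> {1..n-2}" using n4 by auto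
    then have "{1..n-1} \<noteq> {0, n-1}" "{1..n-1} \<noteq> {1..n-2}" "{0, n-1} \<noteq> {1..n-2}"
      by (metis insertI1, metis, metis insertI1)
    then show ?thesis by simp
  qed
  finally show ?thesis using n4 by simp
qed

end

section \<open>Threshold representations through profiles\<close>

(* For a middle position j a point A is summarised by its profile: whether 0, j and n-1 lie in A,
   and k = card (A \<inter> others n j).  f_n depends only on the profile (fn_point_profile), and
   so does the weight sum for weights constant on others n j (sum_profile_weight). *)
definition others :: "nat \<Rightarrow> nat \<Rightarrow> nat set" where
  "others n j = {1..n-2} - {j}"

definition profile_weight :: "nat \<Rightarrow> nat \<Rightarrow> real \<Rightarrow> real \<Rightarrow> real \<Rightarrow> real \<Rightarrow> nat \<Rightarrow> real" where
  "profile_weight n j a b c d i = (if i = 0 then a else if i = j then b else if i = n - 1 then d else c)"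

definition fn_profile :: "nat \<Rightarrow> bool \<Rightarrow> bool \<Rightarrow> nat \<Rightarrow> bool \<Rightarrow> bool" where
  "fn_profile n p q k r \<longleftrightarrow> (p \<and> (q \<or> 0 < k)) \<or> (q \<and> k = n - 3 \<and> r)"

lemma profile_count_cases:
  assumes "k \<le> n - 3" "4 \<le> n"
  obtains "k = 0" | "1 \<le> real k" "real k \<le> real n - 4" "k \<noteq> 0" "k \<noteq> n - 3" | "k = n - 3" "real k = real n - 3"
  using assms by (cases "k = 0"; cases "k = n - 3") (auto simp: of_nat_diff)

lemma fn_profile_threshold:
  "k \<le> n - 3 \<Longrightarrow> 4 \<le> n \<Longrightarrow> \<not> fn_profile n p q k r \<longleftrightarrow>
    (2 * real n - 5) * of_bool p + 2 * of_bool q + 2 * real k + of_bool r \<le> 2 * real n - 4"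
  by (erule profile_count_cases) (cases p; cases q; cases r; auto simp: fn_profile_def)+

lemma flip_pair_profile_threshold:
  "k \<le> n - 3 \<Longrightarrow> 4 \<le> n \<Longrightarrow> \<not> (fn_profile n p q k r \<noteq> (p \<and> q \<and> k = 0 \<and> \<not> r)) \<longleftrightarrow>
    (2 * real n - 6) * of_bool p + of_bool q + 2 * real k + of_bool r \<le> 2 * real n - 5"
  by (erule profile_count_cases) (cases p; cases q; cases r; auto simp: fn_profile_def)+

lemma flip_tail_profile_threshold:
  "k \<le> n - 3 \<Longrightarrow> 4 \<le> n \<Longrightarrow> \<not> (fn_profile n p q k r \<noteq> (\<not> p \<and> q \<and> k = n - 3 \<and> r)) \<longleftrightarrow>
    (real n - 2) * of_bool p + of_bool q + real k \<le> real n - 2"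
  by (erule profile_count_cases) (cases p; cases q; cases r; auto simp: fn_profile_def)+

lemma flip_ends_profile_threshold:
  "k \<le> n - 3 \<Longrightarrow> 4 \<le> n \<Longrightarrow> \<not> (fn_profile n p q k r \<noteq> (p \<and> \<not> q \<and> k = 0 \<and> r)) \<longleftrightarrow>
    (2 * real n - 5) * of_bool p + 2 * of_bool q + 2 * real k + 2 * of_bool r \<le> 2 * real n - 4"
  by (erule profile_count_cases) (cases p; cases q; cases r; auto simp: fn_profile_def)+

lemma flip_middle_profile_threshold:
  "k \<le> n - 3 \<Longrightarrow> 4 \<le> n \<Longrightarrow> \<not> (fn_profile n p q k r \<noteq> (\<not> p \<and> q \<and> k = n - 3 \<and> \<not> r)) \<longleftrightarrow>
    (2 * real n - 5) * of_bool p + 2 * of_bool q + 2 * real k \<le> 2 * real n - 5"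
  by (erule profile_count_cases) (cases p; cases q; cases r; auto simp: fn_profile_def)+

context
  fixes n j :: nat
  assumes n4: "4 \<le> n" and j: "j \<in> {1..n-2}"
begin

lemma lessThan_eq_profile_parts: "{..<n} = insert 0 (insert j (insert (n-1) (others n j)))"
  using n4 j by (auto simp: others_def)

lemma tail_eq_profile_parts: "{1..n-1} = insert j (insert (n-1) (others n j))"
  using n4 j by (auto simp: others_def)

lemma card_others: "card (others n j) = n - 3"
  using n4 j by (simp add: others_def card_Diff_singleton)

lemma card_inter_others_le: "card (A \<inter> others n j) \<le> n - 3"
  unfolding card_others[symmetric] by (intro card_mono) (auto simp: others_def)

lemma card_inter_others_eq_iff: "card (A \<inter> others n j) = n - 3 \<longleftrightarrow> others n j \<subseteq> A"
proof -
  have "finite (others n j)" by (simp add: others_def)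
  then have "card (A \<inter> others n j) = card (others n j) \<longleftrightarrow> A \<inter> others n j = others n j"
    using card_subset_eq[of "others n j" "A \<inter> others n j"] by auto
  then show ?thesis unfolding card_others by blast
qed

lemma sum_profile_weight:
  assumes "A \<subseteq> {..<n}"
  shows "sum (profile_weight n j a b c d) A
    = a * of_bool (0 \<in> A) + b * of_bool (j \<in> A) + c * card (A \<inter> others n j) + d * of_bool (n - 1 \<in> A)"
proof -
  let ?w = "profile_weight n j a b c d"
  have fresh: "0 \<notin> insert j (insert (n-1) (others n j))" "j \<notin> insert (n-1) (others n j)"
    "n - 1 \<notin> others n j"
    using n4 j by (auto simp: others_def)
  have weight_values: "?w 0 = a" "?w j = b" "?w (n-1) = d"
    using n4 j by (auto simp: profile_weight_def)
  have others_part: "(\<Sum>i\<in>others n j. if i \<in> A then ?w i else 0) = c * card (A \<inter> others n j)"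
  proof -
    have "(\<Sum>i\<in>others n j. if i \<in> A then ?w i else 0) = (\<Sum>i\<in>others n j. if i \<in> A then c else 0)"
      by (rule sum.cong) (auto simp: others_def profile_weight_def)
    then show ?thesis by (simp add: sum.If_cases others_def Int_commute)
  qed
  have "sum ?w A = (\<Sum>i<n. if i \<in> A then ?w i else 0)"
    using assms by (simp add: sum.If_cases Int_absorb1)
  also have "\<dots> = a * of_bool (0 \<in> A) + b * of_bool (j \<in> A) + d * of_bool (n - 1 \<in> A)
      + (\<Sum>i\<in>others n j. if i \<in> A then ?w i else 0)"
    unfolding lessThan_eq_profile_parts using fresh weight_values by (simp add: others_def)
  finally show ?thesis unfolding others_part by simp
qed

lemma fn_point_profile:
  assumes "A \<subseteq> {..<n}"
  shows "fn n (point n A) \<longleftrightarrow> fn_profile n (0 \<in> A) (j \<in> A) (card (A \<inter> others n j)) (n - 1 \<in> A)"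
proof -
  have "A \<inter> {1..n-2} \<noteq> {} \<longleftrightarrow> j \<in> A \<or> 0 < card (A \<inter> others n j)"
    using j by (auto simp: others_def card_gt_0_iff)
  moreover have "{1..n-1} \<subseteq> A \<longleftrightarrow> j \<in> A \<and> others n j \<subseteq> A \<and> n - 1 \<in> A"
    unfolding tail_eq_profile_parts by blast
  ultimately show ?thesis
    using n4 by (simp add: fn_point fn_profile_def card_inter_others_eq_iff)
qed

lemma threshold_fn_profileI:
  assumes g: "\<And>A. A \<subseteq> {..<n} \<Longrightarrow>
      g (point n A) \<longleftrightarrow> \<Phi> (0 \<in> A) (j \<in> A) (card (A \<inter> others n j)) (n - 1 \<in> A)"
    and \<Phi>: "\<And>p q k r. k \<le> n - 3 \<Longrightarrow>
      \<not> \<Phi> p q k r \<longleftrightarrow> a * of_bool p + b * of_bool q + c * real k + d * of_bool r \<le> t"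
  shows "threshold_fn n g"
  unfolding threshold_fn_iff_sets
proof (intro exI allI impI)
  fix A assume "A \<subseteq> {..<n}"
  then show "\<not> g (point n A) \<longleftrightarrow> sum (profile_weight n j a b c d) A \<le> t"
    using g \<Phi> card_inter_others_le sum_profile_weight by simp
qed

lemma set_eq_iff_profile:
  assumes A: "A \<subseteq> {..<n}" and B: "B \<subseteq> {..<n}" and "B \<inter> others n j = {} \<or> others n j \<subseteq> B"
  shows "A = B \<longleftrightarrow> (0 \<in> A \<longleftrightarrow> 0 \<in> B) \<and> (j \<in> A \<longleftrightarrow> j \<in> B)
    \<and> card (A \<inter> others n j) = card (B \<inter> others n j) \<and> (n - 1 \<in> A \<longleftrightarrow> n - 1 \<in> B)"
proof (intro iffI; (elim conjE)?)
  assume same: "0 \<in> A \<longleftrightarrow> 0 \<in> B" "j \<in> A \<longleftrightarrow> j \<in> B" "n - 1 \<in> A \<longleftrightarrow> n - 1 \<in> B"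
    and card: "card (A \<inter> others n j) = card (B \<inter> others n j)"
  have fin: "finite (others n j)" by (simp add: others_def)
  have "A \<inter> others n j = B \<inter> others n j"
    using assms(3)
  proof
    assume "B \<inter> others n j = {}"
    then show ?thesis using card fin by simp
  next
    assume "others n j \<subseteq> B"
    then have "card (A \<inter> others n j) = n - 3"
      using card card_inter_others_eq_iff by simp
    then show ?thesis using \<open>others n j \<subseteq> B\<close> card_inter_others_eq_iff by blast
  qed
  show "A = B"
  proof (rule set_eqI)
    fix x
    have "x \<notin> {..<n} \<or> x = 0 \<or> x = j \<or> x = n - 1 \<or> x \<in> others n j"
      using lessThan_eq_profile_parts by blast
    then show "x \<in> A \<longleftrightarrow> x \<in> B"
      using A B same \<open>A \<inter> others n j = B \<inter> others n j\<close> by blast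
  qed
qed simp_all

lemma threshold_flip_profileI:
  assumes "B \<subseteq> {..<n}" "B \<inter> others n j = {} \<or> others n j \<subseteq> B"
    and "\<And>p q k r. k \<le> n - 3 \<Longrightarrow>
      \<not> (fn_profile n p q k r \<noteq> ((p \<longleftrightarrow> 0 \<in> B) \<and> (q \<longleftrightarrow> j \<in> B) \<and> k = card (B \<inter> others n j) \<and> (r \<longleftrightarrow> n - 1 \<in> B)))
      \<longleftrightarrow> a * of_bool p + b * of_bool q + c * real k + d * of_bool r \<le> t"
  shows "threshold_fn n (flip_at (fn n) (point n B))"
proof (rule threshold_fn_profileI)
  fix A assume "A \<subseteq> {..<n}"
  then show "flip_at (fn n) (point n B) (point n A) \<longleftrightarrow>
    fn_profile n (0 \<in> A) (j \<in> A) (card (A \<inter> others n j)) (n - 1 \<in> A) \<noteq>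
      ((0 \<in> A \<longleftrightarrow> 0 \<in> B) \<and> (j \<in> A \<longleftrightarrow> j \<in> B) \<and> card (A \<inter> others n j) = card (B \<inter> others n j)
        \<and> (n - 1 \<in> A \<longleftrightarrow> n - 1 \<in> B))"
    using assms(1,2) by (simp add: flip_at_def point_eq_iff fn_point_profile set_eq_iff_profile)
qed (rule assms(3))

lemma threshold_flip_pair: "threshold_fn n (flip_at (fn n) (point n {0, j}))"
proof (rule threshold_flip_profileI[where a = "2 * real n - 6" and b = 1 and c = 2 and d = 1 and t = "2 * real n - 5"])
  have "{0, j} \<inter> others n j = {}" "n - 1 \<notin> {0, j}" using j by (auto simp: others_def)
  then show "\<not> (fn_profile n p q k r \<noteq> ((p \<longleftrightarrow> 0 \<in> {0, j}) \<and> (q \<longleftrightarrow> j \<in> {0, j}) \<and> k = card ({0, j} \<inter> others n j) \<and> (r \<longleftrightarrow> n - 1 \<in> {0, j})))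
      \<longleftrightarrow> (2 * real n - 6) * of_bool p + 1 * of_bool q + 2 * real k + 1 * of_bool r \<le> 2 * real n - 5"
    if "k \<le> n - 3" for p q k r
    using flip_pair_profile_threshold[OF that n4, of p q r] by simp
qed (use j n4 in \<open>auto simp: others_def\<close>)

end

context
  fixes n :: nat
  assumes n4: "4 \<le> n"
begin

lemma one_mem_middle: "1 \<in> {1..n-2}"
  using n4 by simp

lemma threshold_fn_fn: "threshold_fn n (fn n)"
  by (rule threshold_fn_profileI[OF n4 one_mem_middle, where \<Phi> = "fn_profile n"
        and a = "2 * real n - 5" and b = 2 and c = 2 and d = 1 and t = "2 * real n - 4"])
    (simp_all add: fn_point_profile[OF n4 one_mem_middle] fn_profile_threshold[OF _ n4])

lemma threshold_flip_tail: "threshold_fn n (flip_at (fn n) (point n {1..n-1}))"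
proof (rule threshold_flip_profileI[OF n4 one_mem_middle, where a = "real n - 2" and b = 1 and c = 1 and d = 0
      and t = "real n - 2"])
  have "{1..n-1} \<inter> others n 1 = others n 1" "0 \<notin> {1..n-1}" "1 \<in> {1..n-1}" "n - 1 \<in> {1..n-1}"
    using n4 by (auto simp: others_def)
  then show "\<not> (fn_profile n p q k r \<noteq> ((p \<longleftrightarrow> 0 \<in> {1..n-1}) \<and> (q \<longleftrightarrow> 1 \<in> {1..n-1})
        \<and> k = card ({1..n-1} \<inter> others n 1) \<and> (r \<longleftrightarrow> n - 1 \<in> {1..n-1})))
      \<longleftrightarrow> (real n - 2) * of_bool p + 1 * of_bool q + 1 * real k + 0 * of_bool r \<le> real n - 2"
    if "k \<le> n - 3" for p q k r
    using flip_tail_profile_threshold[OF that n4, of p q r] card_others[OF n4 one_mem_middle] by simp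
qed (use n4 in \<open>auto simp: others_def\<close>)

lemma threshold_flip_ends: "threshold_fn n (flip_at (fn n) (point n {0, n-1}))"
proof (rule threshold_flip_profileI[OF n4 one_mem_middle, where a = "2 * real n - 5" and b = 2 and c = 2 and d = 2
      and t = "2 * real n - 4"])
  have "{0, n-1} \<inter> others n 1 = {}" "1 \<notin> {0, n-1}"
    using n4 by (auto simp: others_def)
  then show "\<not> (fn_profile n p q k r \<noteq> ((p \<longleftrightarrow> 0 \<in> {0, n-1}) \<and> (q \<longleftrightarrow> 1 \<in> {0, n-1})
        \<and> k = card ({0, n-1} \<inter> others n 1) \<and> (r \<longleftrightarrow> n - 1 \<in> {0, n-1})))
      \<longleftrightarrow> (2 * real n - 5) * of_bool p + 2 * of_bool q + 2 * real k + 2 * of_bool r \<le> 2 * real n - 4"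
    if "k \<le> n - 3" for p q k r
    using flip_ends_profile_threshold[OF that n4, of p q r] by simp
qed (use n4 in \<open>auto simp: others_def\<close>)

lemma threshold_flip_middle: "threshold_fn n (flip_at (fn n) (point n {1..n-2}))"
proof (rule threshold_flip_profileI[OF n4 one_mem_middle, where a = "2 * real n - 5" and b = 2 and c = 2 and d = 0
      and t = "2 * real n - 5"])
  have "{1..n-2} \<inter> others n 1 = others n 1" "0 \<notin> {1..n-2}" "1 \<in> {1..n-2}" "n - 1 \<notin> {1..n-2}"
    using n4 by (auto simp: others_def)
  then show "\<not> (fn_profile n p q k r \<noteq> ((p \<longleftrightarrow> 0 \<in> {1..n-2}) \<and> (q \<longleftrightarrow> 1 \<in> {1..n-2})
        \<and> k = card ({1..n-2} \<inter> others n 1) \<and> (r \<longleftrightarrow> n - 1 \<in> {1..n-2})))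
      \<longleftrightarrow> (2 * real n - 5) * of_bool p + 2 * of_bool q + 2 * real k + 0 * of_bool r \<le> 2 * real n - 5"
    if "k \<le> n - 3" for p q k r
    using flip_middle_profile_threshold[OF that n4, of p q r] card_others[OF n4 one_mem_middle] by simp
qed (use n4 in \<open>auto simp: others_def\<close>)

lemma threshold_flip_spec_sets:
  assumes "B \<in> spec_sets n"
  shows "threshold_fn n (flip_at (fn n) (point n B))"
  using assms threshold_flip_pair[OF n4] threshold_flip_tail threshold_flip_ends threshold_flip_middle
  unfolding spec_sets_def by blast

end

theorem mainTheorem18:
  fixes n :: nat
  assumes "n \<ge> 4"
  shows "positive_fn n (fn n) \<and> threshold_fn n (fn n) \<and> depends_on_all n (fn n)
         \<and> \<not> lro n (fn n) \<and> spec_number n (fn n) = n + 1"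
proof -
  have "spec_number n (fn n) = card (point n ` spec_sets n)"
    using specifies_spec_sets[OF assms] threshold_flip_spec_sets[OF assms]
    by (intro spec_number_eqI) auto
  then show ?thesis
    using positive_fn_fn threshold_fn_fn[OF assms] depends_on_all_fn[OF assms] not_lro_fn[OF assms]
      card_spec_sets[OF assms]
    by simp
qed

end
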